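(* Consider the resilient constrained consensus algorithm described in the context, with $\bigcap_{i\in\mathcal H}\mathcal X_i=\{x^*\}$. For $i\in\mathcal H$ and time $t$, define $$e_i(t)=\sum_{j\in\mathcal F_i(t)}(x_i(t)-x_{ji}(t))-\sum_{j\in\mathcal H_i\setminus\mathcal L_i(t)}(x_i(t)-x_{ji}(t))$$ and $$S_i(t)=\tfrac12\sum_{j\in\mathcal H}\|x_i(t)-x_j(t)\|^2+\langle x_i(t)-x^*,e_i(t)\rangle.$$ Then for every $i\in\mathcal H$ and every $t$, $$S_i(t)\ge\tfrac12\sum_{j\in\mathcal L_i(t)}\|x_i(t)-x_j(t)\|^2-2\sum_{j\in\mathcal H_i\setminus\mathcal L_i(t)}\|x_i(t)-x^*\|^2,$$ and $$\sum_{i\in\mathcal H}\phi_i(t)=\sum_{i\in\mathcal H}S_i(t).$$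
   Context: Setting: There are $n$ agents $\mathcal N=\{1,\dots,n\}$ on a complete communication graph. A known integer $f\ge0$ is given. The agents are partitioned into normal agents $\mathcal H$ and Byzantine agents $\mathcal F$ with $|\mathcal F|\le f$. Each $i\in\mathcal H$ has a closed convex $\mathcal X_i\subseteq\mathbb R^m$. Algorithm: normal agent $i$ has state $x_i(t)\in\mathbb R^m$ and at time $t$ receives $x_{ji}(t)$ from each $j\ne i$. If $j\in\mathcal H$, then $x_{ji}(t)=x_j(t)$. If $j\in\mathcal F$, the value is arbitrary and may differ per recipient. Agent $i$ discards the $f$ received vectors with largest $\|x_i(t)-x_{ji}(t)\|$, with ties broken arbitrarily. The remaining $n-f-1$ senders form $\mathcal M_i(t)\subseteq\mathcal N\setminus\{i\}$. The update is $$x_i(t+1)=\mathrm P_{\mathcal X_i}\Big[x_i(t)+\alpha\sum_{j\in\mathcal M_i(t)}(x_{ji}(t)-x_i(t))\Big],$$ with $\alpha>0$ and $\mathrm P_{\mathcal C}$ the Euclidean projection. Notation: - $\mathcal H_i=\mathcal H\setminus\{i\}$; - $\mathcal L_i(t)=\mathcal M_i(t)\cap\mathcal H_i$; - $\mathcal F_i(t)=\mathcal M_i(t)\setminus\mathcal L_i(t)$; - $\phi_i(t)=\big\langle x_i(t)-x^*,\sum_{j\in\mathcal M_i(t)}(x_i(t)-x_{ji}(t))\big\rangle$; - $\langle x,y\rangle=x^\top y$. *)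

theory Defs
  imports "HOL-Analysis.Analysis"
begin

text \<open>Conventions: time t :: nat; x t i is the state of agent i at time t;
 r t j i is the vector x_ji(t) received by agent i from agent j at time t;
 M t i is the set M_i(t) of retained senders.\<close>

definition Lset :: "nat set \<Rightarrow> (nat \<Rightarrow> nat \<Rightarrow> nat set) \<Rightarrow> nat \<Rightarrow> nat \<Rightarrow> nat set" where
  "Lset H M i t = M t i \<inter> (H - {i})"

definition Fset :: "nat set \<Rightarrow> (nat \<Rightarrow> nat \<Rightarrow> nat set) \<Rightarrow> nat \<Rightarrow> nat \<Rightarrow> nat set" where
  "Fset H M i t = M t i - Lset H M i t"

definition evec :: "nat set \<Rightarrow> (nat \<Rightarrow> nat \<Rightarrow> nat set) \<Rightarrow> (nat \<Rightarrow> nat \<Rightarrow> 'v::real_vector)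
    \<Rightarrow> (nat \<Rightarrow> nat \<Rightarrow> nat \<Rightarrow> 'v) \<Rightarrow> nat \<Rightarrow> nat \<Rightarrow> 'v" where
  "evec H M x r i t = (\<Sum>j\<in>Fset H M i t. x t i - r t j i)
                     - (\<Sum>j\<in>(H - {i}) - Lset H M i t. x t i - r t j i)"

definition Sval :: "nat set \<Rightarrow> (nat \<Rightarrow> nat \<Rightarrow> nat set) \<Rightarrow> (nat \<Rightarrow> nat \<Rightarrow> 'v::real_inner)
    \<Rightarrow> (nat \<Rightarrow> nat \<Rightarrow> nat \<Rightarrow> 'v) \<Rightarrow> 'v \<Rightarrow> nat \<Rightarrow> nat \<Rightarrow> real" where
  "Sval H M x r xs i t = (1/2) * (\<Sum>j\<in>H. (norm (x t i - x t j))\<^sup>2)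
                         + inner (x t i - xs) (evec H M x r i t)"

definition phi :: "(nat \<Rightarrow> nat \<Rightarrow> nat set) \<Rightarrow> (nat \<Rightarrow> nat \<Rightarrow> 'v::real_inner)
    \<Rightarrow> (nat \<Rightarrow> nat \<Rightarrow> nat \<Rightarrow> 'v) \<Rightarrow> 'v \<Rightarrow> nat \<Rightarrow> nat \<Rightarrow> real" where
  "phi M x r xs i t = inner (x t i - xs) (\<Sum>j\<in>M t i. x t i - r t j i)"

end

theory Submission
  imports Defs
begin

(* Write L_i for the retained and D_i = H_i - L_i for the discarded normal neighbours of i.
   By Cauchy-Schwarz, <x_i - x*, e_i> >= -|x_i - x*| (sum_{F_i} |x_i - x_ji| + sum_{D_i} |x_i - x_j|).
   Agent i discarded f >= |F| values, so |F_i| <= |D_i|, and every retained value is at least as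
   close to x_i as every discarded one; hence the faulty sum is at most the D_i sum, and completing
   the square, d^2/2 - 2ad >= -2a^2, termwise over D_i gives the bound.
   For the identity, phi_i = <x_i - x*, sum_{j in H} (x_i - x_j) + e_i>, and by polarization
   sum_i <x_i - x*, sum_j (x_i - x_j)> = 1/2 sum_i sum_j |x_i - x_j|^2, the x* terms cancelling
   by antisymmetry. *)

lemma inner_diff_polarization:
  fixes u v c :: "'v::real_inner"
  shows "inner (u - c) (u - v) = (1/2) * (norm (u - v))\<^sup>2 + (1/2) * ((norm (u - c))\<^sup>2 - (norm (v - c))\<^sup>2)"
  by (simp add: power2_norm_eq_inner algebra_simps inner_commute)

lemma sum_inner_sum_diff_eq_half_sum_norm_sq:
  fixes y :: "'a \<Rightarrow> 'v::real_inner"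
  assumes "finite H"
  shows "(\<Sum>i\<in>H. inner (y i - c) (\<Sum>j\<in>H. y i - y j)) = (\<Sum>i\<in>H. (1/2) * (\<Sum>j\<in>H. (norm (y i - y j))\<^sup>2))"
proof -
  define g where "g i = (norm (y i - c))\<^sup>2" for i
  have "(\<Sum>i\<in>H. inner (y i - c) (\<Sum>j\<in>H. y i - y j))
      = (\<Sum>i\<in>H. \<Sum>j\<in>H. (1/2) * (norm (y i - y j))\<^sup>2 + (1/2) * (g i - g j))"
    unfolding g_def by (simp add: inner_sum_right inner_diff_polarization)
  also have "\<dots> = (\<Sum>i\<in>H. (1/2) * (\<Sum>j\<in>H. (norm (y i - y j))\<^sup>2)) + (1/2) * (\<Sum>i\<in>H. \<Sum>j\<in>H. g i - g j)"
    by (simp add: sum.distrib sum_distrib_left)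
  also have "(\<Sum>i\<in>H. \<Sum>j\<in>H. g i - g j) = 0"
    using sum.swap[of "\<lambda>i j. g i" H H] by (simp add: sum_subtractf)
  finally show ?thesis
    by simp
qed

lemma sum_le_sum_if_card_le_and_dominated:
  fixes f g :: "'a \<Rightarrow> 'b::ordered_comm_monoid_add"
  assumes "finite B" "card A \<le> card B"
    and dom: "\<forall>a\<in>A. \<forall>b\<in>B. f a \<le> g b"
    and nonneg: "\<forall>b\<in>B. 0 \<le> g b"
  shows "sum f A \<le> sum g B"
proof (cases "finite A")
  case False
  then show ?thesis
    using nonneg by (simp add: sum_nonneg)
next
  case True
  obtain h where h: "h ` A \<subseteq> B" "inj_on h A"
    using card_le_inj True assms(1,2) by blast
  have "sum f A \<le> sum (g \<circ> h) A"
    using dom h(1) by (intro sum_mono) auto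
  also have "\<dots> = sum g (h ` A)"
    using h(2) by (simp add: sum.reindex)
  also have "\<dots> \<le> sum g B"
    using h(1) nonneg assms(1) by (intro sum_mono2) auto
  finally show ?thesis .
qed

lemma abs_inner_sum_le:
  fixes u :: "'v::real_inner"
  shows "\<bar>inner u (\<Sum>j\<in>A. v j)\<bar> \<le> norm u * (\<Sum>j\<in>A. norm (v j))"
  using Cauchy_Schwarz_ineq2[of u "sum v A"] norm_sum[of v A]
  by (meson mult_left_mono norm_ge_zero order_trans)

lemma half_sum_norm_sq_plus_inner_ge:
  fixes p c :: "'v::real_inner" and y z :: "'a \<Rightarrow> 'v"
  assumes "finite D" "card E \<le> card D"
    and dom: "\<forall>j\<in>E. \<forall>k\<in>D. norm (p - z j) \<le> norm (p - y k)"
  shows "(1/2) * (\<Sum>k\<in>D. (norm (p - y k))\<^sup>2) + inner (p - c) ((\<Sum>j\<in>E. p - z j) - (\<Sum>k\<in>D. p - y k))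
         \<ge> - 2 * (\<Sum>k\<in>D. (norm (p - c))\<^sup>2)"
proof -
  define a where "a = norm (p - c)"
  define d where "d k = norm (p - y k)" for k
  have "(\<Sum>j\<in>E. norm (p - z j)) \<le> (\<Sum>k\<in>D. d k)"
    unfolding d_def using assms by (intro sum_le_sum_if_card_le_and_dominated) auto
  then have "a * (\<Sum>j\<in>E. norm (p - z j)) \<le> a * (\<Sum>k\<in>D. d k)"
    unfolding a_def by (simp add: mult_left_mono)
  moreover have "inner (p - c) (\<Sum>j\<in>E. p - z j) \<ge> - (a * (\<Sum>j\<in>E. norm (p - z j)))"
    using abs_inner_sum_le[of "p - c" "\<lambda>j. p - z j" E] unfolding a_def by linarith
  moreover have "inner (p - c) (\<Sum>k\<in>D. p - y k) \<le> a * (\<Sum>k\<in>D. d k)"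
    using abs_inner_sum_le[of "p - c" "\<lambda>k. p - y k" D] unfolding a_def d_def by linarith
  ultimately have cross: "inner (p - c) ((\<Sum>j\<in>E. p - z j) - (\<Sum>k\<in>D. p - y k)) \<ge> - 2 * a * (\<Sum>k\<in>D. d k)"
    by (simp add: inner_diff_right)
  have "(\<Sum>k\<in>D. - 2 * a\<^sup>2) \<le> (\<Sum>k\<in>D. (1/2) * (d k)\<^sup>2 - 2 * a * d k)"
  proof (rule sum_mono)
    fix k
    have "0 \<le> (d k - 2 * a)\<^sup>2" by simp
    then show "- 2 * a\<^sup>2 \<le> (1/2) * (d k)\<^sup>2 - 2 * a * d k"
      by (simp add: power2_eq_square algebra_simps)
  qed
  then have "- 2 * (\<Sum>k\<in>D. a\<^sup>2) \<le> (1/2) * (\<Sum>k\<in>D. (d k)\<^sup>2) - 2 * a * (\<Sum>k\<in>D. d k)"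
    by (simp add: sum_subtractf sum_distrib_left)
  with cross show ?thesis
    unfolding a_def d_def by linarith
qed

lemma card_Int_le_card_Diff:
  assumes "finite A" "finite B" "A \<inter> B = {}" "card B \<le> card ((A \<union> B) - M)"
  shows "card (M \<inter> B) \<le> card (A - M)"
proof -
  have "(A \<union> B) - M = (A - M) \<union> (B - M)" "(A - M) \<inter> (B - M) = {}"
    using assms(3) by auto
  then have "card ((A \<union> B) - M) = card (A - M) + card (B - M)"
    using assms(1,2) by (simp add: card_Un_disjoint)
  moreover have "card B = card (M \<inter> B) + card (B - M)"
    using assms(2) card_Int_Diff[of B M] by (simp add: Int_commute)
  ultimately show ?thesis
    using assms(4) by linarith
qed

lemma sum_remove_subset_diff:
  assumes "finite H" "i \<in> H" "L \<subseteq> H - {i}"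
  shows "sum g H = g i + sum g L + sum g ((H - {i}) - L)"
  using assms sum.remove[of H i g] sum.subset_diff[of L "H - {i}" g]
  by (simp add: ac_simps)

lemma Lset_subset: "Lset H M i t \<subseteq> H - {i}"
  unfolding Lset_def by blast

lemma evec_honest:
  assumes "\<forall>j\<in>H - {i}. r t j i = x t j"
  shows "evec H M x r i t = (\<Sum>j\<in>Fset H M i t. x t i - r t j i) - (\<Sum>j\<in>(H - {i}) - Lset H M i t. x t i - x t j)"
proof -
  have "(\<Sum>j\<in>(H - {i}) - Lset H M i t. x t i - r t j i) = (\<Sum>j\<in>(H - {i}) - Lset H M i t. x t i - x t j)"
    using assms by (intro sum.cong) auto
  then show ?thesis
    unfolding evec_def by simp
qed

lemma phi_eq_inner_sum_plus_evec:
  assumes "finite H" "finite (M t i)" "i \<in> H" "\<forall>j\<in>H - {i}. r t j i = x t j"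
  shows "phi M x r xs i t = inner (x t i - xs) (\<Sum>j\<in>H. x t i - x t j) + inner (x t i - xs) (evec H M x r i t)"
proof -
  let ?L = "Lset H M i t" and ?D = "(H - {i}) - Lset H M i t"
  have "M t i = ?L \<union> Fset H M i t" "?L \<inter> Fset H M i t = {}"
    unfolding Fset_def Lset_def by auto
  then have "(\<Sum>j\<in>M t i. x t i - r t j i) = (\<Sum>j\<in>?L. x t i - r t j i) + (\<Sum>j\<in>Fset H M i t. x t i - r t j i)"
    using assms(2) by (metis finite_Un sum.union_disjoint)
  also have "(\<Sum>j\<in>?L. x t i - r t j i) = (\<Sum>j\<in>?L. x t i - x t j)"
    using assms(4) Lset_subset[of H M i t] by (intro sum.cong) auto
  also have "\<dots> = (\<Sum>j\<in>H. x t i - x t j) - (\<Sum>j\<in>?D. x t i - x t j)"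
    using sum_remove_subset_diff[OF assms(1,3) Lset_subset[of H M i t], of "\<lambda>j. x t i - x t j"] by simp
  finally show ?thesis
    unfolding phi_def evec_honest[where H=H and i=i and r=r and t=t and x=x and M=M, OF assms(4)] by (simp add: inner_add_right inner_diff_right)
qed

lemma Sval_ge:
  assumes "finite H" "i \<in> H" "\<forall>j\<in>H - {i}. r t j i = x t j"
    and card: "card (Fset H M i t) \<le> card ((H - {i}) - Lset H M i t)"
    and dom: "\<forall>j\<in>Fset H M i t. \<forall>k\<in>(H - {i}) - Lset H M i t. norm (x t i - r t j i) \<le> norm (x t i - x t k)"
  shows "Sval H M x r xs i t \<ge>
           (1/2) * (\<Sum>j\<in>Lset H M i t. (norm (x t i - x t j))\<^sup>2)
           - 2 * (\<Sum>j\<in>(H - {i}) - Lset H M i t. (norm (x t i - xs))\<^sup>2)"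
proof -
  have "(1/2) * (\<Sum>j\<in>H. (norm (x t i - x t j))\<^sup>2) = (1/2) * (\<Sum>j\<in>Lset H M i t. (norm (x t i - x t j))\<^sup>2)
      + (1/2) * (\<Sum>j\<in>(H - {i}) - Lset H M i t. (norm (x t i - x t j))\<^sup>2)"
    using sum_remove_subset_diff[OF assms(1,2) Lset_subset[of H M i t], of "\<lambda>j. (norm (x t i - x t j))\<^sup>2"]
    by (simp add: algebra_simps)
  moreover have "(1/2) * (\<Sum>j\<in>(H - {i}) - Lset H M i t. (norm (x t i - x t j))\<^sup>2) + inner (x t i - xs) (evec H M x r i t)
      \<ge> - 2 * (\<Sum>j\<in>(H - {i}) - Lset H M i t. (norm (x t i - xs))\<^sup>2)"
    unfolding evec_honest[where H=H and i=i and r=r and t=t and x=x and M=M, OF assms(3)]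
    using assms(1) card dom by (intro half_sum_norm_sq_plus_inner_ge) auto
  ultimately show ?thesis
    unfolding Sval_def by linarith
qed

lemma Fset_card_le_and_dominated:
  assumes "finite H" "finite F" "H \<inter> F = {}"
    and sub: "M t i \<subseteq> (H - {i}) \<union> F"
    and card: "card F \<le> card (((H - {i}) \<union> F) - M t i)"
    and dom: "\<forall>j\<in>M t i. \<forall>k\<in>((H - {i}) \<union> F) - M t i. norm (x t i - r t j i) \<le> norm (x t i - r t k i)"
    and honest: "\<forall>j\<in>H - {i}. r t j i = x t j"
  shows "card (Fset H M i t) \<le> card ((H - {i}) - Lset H M i t)"
    and "\<forall>j\<in>Fset H M i t. \<forall>k\<in>(H - {i}) - Lset H M i t. norm (x t i - r t j i) \<le> norm (x t i - x t k)"
proof -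
  have F_eq: "Fset H M i t = M t i \<inter> F" and D_eq: "(H - {i}) - Lset H M i t = (H - {i}) - M t i"
    using sub assms(3) unfolding Fset_def Lset_def by auto
  show "card (Fset H M i t) \<le> card ((H - {i}) - Lset H M i t)"
    unfolding F_eq D_eq using assms(1-3) card by (intro card_Int_le_card_Diff) auto
  show "\<forall>j\<in>Fset H M i t. \<forall>k\<in>(H - {i}) - Lset H M i t. norm (x t i - r t j i) \<le> norm (x t i - x t k)"
    unfolding F_eq D_eq
  proof (intro ballI)
    fix j k assume j: "j \<in> M t i \<inter> F" and k: "k \<in> (H - {i}) - M t i"
    then have "norm (x t i - r t j i) \<le> norm (x t i - r t k i)"
      using dom by blast
    moreover have "r t k i = x t k"
      using honest k by blast
    ultimately show "norm (x t i - r t j i) \<le> norm (x t i - x t k)"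
      by simp
  qed
qed

theorem lemma2:
  fixes n f :: nat and H F :: "nat set" and X :: "nat \<Rightarrow> (real^'m) set"
    and xs :: "real^'m" and \<alpha> :: real
    and x :: "nat \<Rightarrow> nat \<Rightarrow> real^'m"
    and r :: "nat \<Rightarrow> nat \<Rightarrow> nat \<Rightarrow> real^'m"
    and M :: "nat \<Rightarrow> nat \<Rightarrow> nat set"
  assumes part: "H \<union> F = {1..n}" "H \<inter> F = {}" "card F \<le> f"
    and closed: "\<forall>i\<in>H. closed (X i) \<and> convex (X i)"
    and inter: "(\<Inter>i\<in>H. X i) = {xs}"
    and alpha: "\<alpha> > 0"
    and honest: "\<forall>t. \<forall>i\<in>H. \<forall>j\<in>H - {i}. r t j i = x t j"
    and trim: "\<forall>t. \<forall>i\<in>H. M t i \<subseteq> {1..n} - {i}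
                 \<and> card (({1..n} - {i}) - M t i) = f
                 \<and> (\<forall>j\<in>M t i. \<forall>k\<in>({1..n} - {i}) - M t i.
                       norm (x t i - r t j i) \<le> norm (x t i - r t k i))"
    and update: "\<forall>t. \<forall>i\<in>H. x (Suc t) i =
                   closest_point (X i) (x t i + \<alpha> *\<^sub>R (\<Sum>j\<in>M t i. r t j i - x t i))"
  shows "(\<forall>i\<in>H. \<forall>t. Sval H M x r xs i t \<ge>
            (1/2) * (\<Sum>j\<in>Lset H M i t. (norm (x t i - x t j))\<^sup>2)
            - 2 * (\<Sum>j\<in>(H - {i}) - Lset H M i t. (norm (x t i - xs))\<^sup>2))
         \<and> (\<forall>t. (\<Sum>i\<in>H. phi M x r xs i t) = (\<Sum>i\<in>H. Sval H M x r xs i t))"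
proof -
  have fin: "finite H" "finite F"
    using part(1) by (metis finite_Un finite_atLeastAtMost)+
  have bound: "Sval H M x r xs i t \<ge> (1/2) * (\<Sum>j\<in>Lset H M i t. (norm (x t i - x t j))\<^sup>2)
      - 2 * (\<Sum>j\<in>(H - {i}) - Lset H M i t. (norm (x t i - xs))\<^sup>2)" if i: "i \<in> H" for i t
  proof -
    have others: "{1..n} - {i} = (H - {i}) \<union> F"
      using part(1,2) i by auto
    have trim_i: "M t i \<subseteq> (H - {i}) \<union> F" "card F \<le> card (((H - {i}) \<union> F) - M t i)"
      "\<forall>j\<in>M t i. \<forall>k\<in>((H - {i}) \<union> F) - M t i. norm (x t i - r t j i) \<le> norm (x t i - r t k i)"
      using trim[rule_format, OF i, of t] part(3) unfolding others by auto
    have honest_i: "\<forall>j\<in>H - {i}. r t j i = x t j"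
      using honest i by blast
    show ?thesis
      using Fset_card_le_and_dominated[where M=M and t=t and i=i and x=x and r=r, OF fin part(2) trim_i honest_i]
      by (intro Sval_ge[where M=M and t=t and x=x and r=r, OF fin(1) i honest_i])
  qed
  have "(\<Sum>i\<in>H. phi M x r xs i t) = (\<Sum>i\<in>H. Sval H M x r xs i t)" for t
  proof -
    have "phi M x r xs i t = inner (x t i - xs) (\<Sum>j\<in>H. x t i - x t j) + inner (x t i - xs) (evec H M x r i t)"
      if "i \<in> H" for i
      using fin(1) that trim honest finite_subset[of "M t i" "{1..n} - {i}"]
      by (intro phi_eq_inner_sum_plus_evec) auto
    then show ?thesis
      unfolding Sval_def by (simp add: sum.distrib sum_inner_sum_diff_eq_half_sum_norm_sq[OF fin(1)])
  qed
  with bound show ?thesis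
    by blast
qed

end
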